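(* Let $Q=(q_1,\ldots,q_k)$ be an instance of the FIFO stack-up problem and $p$ a positive integer. If the sequence graph $G_Q$ has a directed path-decomposition of width $p-1$, then there is a processing of $Q$ with $p$ stack-up places, i.e. a processing in which every configuration has at most $p$ open pallets.
   Context: A bin $b$ carries a pallet symbol $\mathit{plt}(b)$ (a positive integer). An instance is a list $Q=(q_1,\ldots,q_k)$ of finite sequences of bins, all bins pairwise distinct; it is assumed that for every pallet symbol occurring, the sequences together contain at least two bins destined for it. $\mathit{plts}(Q)$ is the set of pallet symbols occurring in $Q$. A subsequence of $q=(b_1,\ldots,b_n)$ is a suffix $q'=(b_j,\ldots,b_n)$ (possibly empty), and $q-q'=(b_1,\ldots,b_{j-1})$. A configuration is a pair $(Q,Q')$ with $Q'=(q'_1,\ldots,q'_k)$, each $q'_j$ a subsequence of $q_j$. A pallet $t$ is open in $(Q,Q')$ if some bin for $t$ lies in some $q'_i$ and some bin for $t$ lies in some $q_j-q'_j$. A transformation step removes the first bin of one nonempty $q'_i$. A processing of $Q$ is a sequence of transformation steps transforming $(Q,Q)$ into the configuration where all $k$ sequences are empty. The sequence graph $G_Q$ has vertex set $\mathit{plts}(Q)$ and an arc $(u,v)$ iff $u\ne v$ and some sequence $q_i$ contains a bin for $u$ at a position strictly before a bin for $v$. A directed path-decomposition of a digraph $G=(V,E)$ is a sequence $(X_1,\ldots,X_r)$ of subsets of $V$ with: (1) $\bigcup_i X_i=V$; (2) for every arc $(u,v)$ there are $i\le j$ with $u\in X_i$, $v\in X_j$; (3) if $u\in X_i\cap X_j$,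 $i\le j$, then $u\in X_l$ for all $i\le l\le j$. Its width is $\max_i|X_i|-1$. *)

theory Defs
  imports Main
begin

text \<open>Bins are elements of an arbitrary type 'b; plt assigns to each bin its pallet symbol.
An instance Q is a list of k sequences of bins; a configuration is given by the list Q' of
the remaining suffixes.\<close>

definition plts :: "('b \<Rightarrow> nat) \<Rightarrow> 'b list list \<Rightarrow> nat set" where
  "plts plt Q = plt ` set (concat Q)"

definition is_instance :: "('b \<Rightarrow> nat) \<Rightarrow> 'b list list \<Rightarrow> bool" where
  "is_instance plt Q \<longleftrightarrow>
     distinct (concat Q) \<and>
     (\<forall>b \<in> set (concat Q). 0 < plt b) \<and>
     (\<forall>t \<in> plts plt Q. 2 \<le> length (filter (\<lambda>b. plt b = t) (concat Q)))"

definition is_subseq :: "'b list \<Rightarrow> 'b list \<Rightarrow> bool" where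
  "is_subseq q' q \<longleftrightarrow> (\<exists>j \<le> length q. q' = drop j q)"

definition seq_minus :: "'b list \<Rightarrow> 'b list \<Rightarrow> 'b list" where
  "seq_minus q q' = take (length q - length q') q"

definition is_config :: "'b list list \<Rightarrow> 'b list list \<Rightarrow> bool" where
  "is_config Q Q' \<longleftrightarrow> length Q' = length Q \<and>
     (\<forall>j < length Q. is_subseq (Q' ! j) (Q ! j))"

definition open_plts :: "('b \<Rightarrow> nat) \<Rightarrow> 'b list list \<Rightarrow> 'b list list \<Rightarrow> nat set" where
  "open_plts plt Q Q' = {t.
     (\<exists>i < length Q. \<exists>b \<in> set (Q' ! i). plt b = t) \<and>
     (\<exists>j < length Q. \<exists>b \<in> set (seq_minus (Q ! j) (Q' ! j)). plt b = t)}"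

definition trans_step :: "'b list list \<Rightarrow> 'b list list \<Rightarrow> bool" where
  "trans_step Q' Q'' \<longleftrightarrow>
     (\<exists>i < length Q'. Q' ! i \<noteq> [] \<and> Q'' = Q'[i := tl (Q' ! i)])"

text \<open>A processing, given as the list of configurations (second components) it passes through,
from (Q,Q) to the configuration with all sequences empty.\<close>
definition is_processing :: "'b list list \<Rightarrow> 'b list list list \<Rightarrow> bool" where
  "is_processing Q cs \<longleftrightarrow> cs \<noteq> [] \<and> hd cs = Q \<and>
     last cs = replicate (length Q) [] \<and>
     (\<forall>n. Suc n < length cs \<longrightarrow> trans_step (cs ! n) (cs ! Suc n))"

text \<open>Sequence graph G_Q: vertex set plts Q, arc set seq_arcs.\<close>
definition seq_arcs :: "('b \<Rightarrow> nat) \<Rightarrow> 'b list list \<Rightarrow> (nat \<times> nat) set" where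
  "seq_arcs plt Q = {(u, v). u \<noteq> v \<and>
     (\<exists>q \<in> set Q. \<exists>i j. i < j \<and> j < length q \<and> plt (q ! i) = u \<and> plt (q ! j) = v)}"

definition is_dpd :: "'v set \<Rightarrow> ('v \<times> 'v) set \<Rightarrow> 'v set list \<Rightarrow> bool" where
  "is_dpd V E X \<longleftrightarrow> X \<noteq> [] \<and>
     (\<forall>i < length X. X ! i \<subseteq> V) \<and>
     \<Union> (set X) = V \<and>
     (\<forall>(u, v) \<in> E. \<exists>i j. i \<le> j \<and> j < length X \<and> u \<in> X ! i \<and> v \<in> X ! j) \<and>
     (\<forall>u i j l. i \<le> l \<and> l \<le> j \<and> j < length X \<and> u \<in> X ! i \<and> u \<in> X ! j \<longrightarrow> u \<in> X ! l)"

definition dpd_width :: "'v set list \<Rightarrow> int" where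
  "dpd_width X = int (Max (card ` set X)) - 1"

end

theory Submission
  imports Defs
begin

text \<open>Let \<open>first_bag t\<close> be the index of the first bag of the decomposition containing pallet \<open>t\<close>.
Process greedily: always remove a front bin whose pallet has the least \<open>first_bag\<close>, and let \<open>k\<close>
be the largest \<open>first_bag\<close> value removed so far. Then every removed pallet starts in a bag
\<open>\<le> k\<close>, and every remaining pallet occurs in a bag \<open>\<ge> k\<close>: a remaining bin either carries the pallet
of the front bin of its sequence or is the head of an arc from that pallet. By the interval
property of the decomposition every open pallet therefore lies in bag \<open>k\<close>, so at most
\<open>p\<close> pallets are open at any time.\<close>

lemma in_set_drop_conv_nth:
  "x \<in> set (drop n xs) \<longleftrightarrow> (\<exists>i. n \<le> i \<and> i < length xs \<and> xs ! i = x)"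
proof
  assume "x \<in> set (drop n xs)"
  then obtain i where "i < length (drop n xs)" "drop n xs ! i = x"
    by (auto simp: in_set_conv_nth)
  then show "\<exists>i. n \<le> i \<and> i < length xs \<and> xs ! i = x"
    by (intro exI[of _ "n + i"]) auto
next
  assume "\<exists>i. n \<le> i \<and> i < length xs \<and> xs ! i = x"
  then obtain i where "n \<le> i" "i < length xs" "xs ! i = x" by blast
  then show "x \<in> set (drop n xs)"
    by (auto simp: in_set_conv_nth intro!: exI[of _ "i - n"])
qed

lemma in_set_take_conv_nth:
  "x \<in> set (take n xs) \<longleftrightarrow> (\<exists>i. i < n \<and> i < length xs \<and> xs ! i = x)"
  by (auto simp: in_set_conv_nth)

lemma seq_minus_drop: "seq_minus q (drop n q) = take n q"
  by (cases "n \<le> length q") (auto simp: seq_minus_def)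

lemma is_processing_iff_successively:
  "is_processing Q cs \<longleftrightarrow>
     cs \<noteq> [] \<and> hd cs = Q \<and> last cs = replicate (length Q) [] \<and> successively trans_step cs"
  by (simp add: is_processing_def successively_conv_nth)

lemma plt_nth_in_plts:
  "j < length Q \<Longrightarrow> i < length (Q ! j) \<Longrightarrow> plt (Q ! j ! i) \<in> plts plt Q"
  unfolding plts_def by (force intro: nth_mem)

lemma card_nth_le_Max_card: "k < length X \<Longrightarrow> card (X ! k) \<le> Max (card ` set X)"
  by (intro Max_ge) auto

locale sequence_graph_dpd =
  fixes plt :: "'b \<Rightarrow> nat" and Q :: "'b list list" and X :: "nat set list"
  assumes dpd: "is_dpd (plts plt Q) (seq_arcs plt Q) X"
begin

lemma bag_subset_plts: "k < length X \<Longrightarrow> X ! k \<subseteq> plts plt Q"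
  using dpd by (simp add: is_dpd_def)

lemma finite_bag: "k < length X \<Longrightarrow> finite (X ! k)"
  using bag_subset_plts finite_subset by (fastforce simp: plts_def)

lemma arc_in_bags:
  "(u, v) \<in> seq_arcs plt Q \<Longrightarrow> \<exists>i j. i \<le> j \<and> j < length X \<and> u \<in> X ! i \<and> v \<in> X ! j"
  using dpd unfolding is_dpd_def by blast

lemma bag_interval:
  "i \<le> l \<Longrightarrow> l \<le> j \<Longrightarrow> j < length X \<Longrightarrow> u \<in> X ! i \<Longrightarrow> u \<in> X ! j \<Longrightarrow> u \<in> X ! l"
  using dpd unfolding is_dpd_def by blast

lemma plts_in_some_bag: "t \<in> plts plt Q \<Longrightarrow> \<exists>l < length X. t \<in> X ! l"
proof -
  assume "t \<in> plts plt Q"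
  with dpd obtain B where "B \<in> set X" "t \<in> B"
    unfolding is_dpd_def by blast
  then show ?thesis
    by (auto simp: in_set_conv_nth)
qed

definition first_bag :: "nat \<Rightarrow> nat" where
  "first_bag t = (LEAST i. t \<in> X ! i)"

lemma first_bag_le: "t \<in> X ! l \<Longrightarrow> first_bag t \<le> l"
  unfolding first_bag_def by (rule Least_le)

lemma first_bag:
  assumes "t \<in> plts plt Q"
  shows "first_bag t < length X" "t \<in> X ! first_bag t"
proof -
  obtain l where l: "l < length X" "t \<in> X ! l"
    using plts_in_some_bag assms by blast
  show "t \<in> X ! first_bag t"
    unfolding first_bag_def using l(2) by (rule LeastI)
  show "first_bag t < length X"
    using first_bag_le[OF l(2)] l(1) by simp
qed

text \<open>Configurations are encoded by the number \<open>ns ! j\<close> of bins already removed from \<open>Q ! j\<close>.\<close>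

definition remaining :: "nat list \<Rightarrow> 'b list list" where
  "remaining ns = map (\<lambda>j. drop (ns ! j) (Q ! j)) [0..<length Q]"

lemma remaining_nth: "j < length Q \<Longrightarrow> remaining ns ! j = drop (ns ! j) (Q ! j)"
  by (simp add: remaining_def)

lemma remaining_start: "remaining (replicate (length Q) 0) = Q"
  by (auto simp: remaining_def intro!: nth_equalityI)

lemma remaining_final:
  "\<forall>j < length Q. length (Q ! j) \<le> ns ! j \<Longrightarrow> remaining ns = replicate (length Q) []"
  by (auto simp: remaining_def intro!: nth_equalityI)

lemma trans_step_remaining:
  assumes "length ns = length Q" "j < length Q" "ns ! j < length (Q ! j)"
  shows "trans_step (remaining ns) (remaining (ns[j := Suc (ns ! j)]))"
proof -
  have "remaining (ns[j := Suc (ns ! j)]) = (remaining ns)[j := drop (Suc (ns ! j)) (Q ! j)]"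
    using assms by (auto simp: remaining_def nth_list_update intro!: nth_equalityI)
  moreover have "tl (remaining ns ! j) = drop (Suc (ns ! j)) (Q ! j)"
    using assms by (simp add: remaining_nth drop_Suc tl_drop)
  moreover have "remaining ns ! j \<noteq> []"
    using assms by (simp add: remaining_nth)
  ultimately show ?thesis
    unfolding trans_step_def using assms by (auto simp: remaining_def)
qed

definition remaining_bins :: "nat list \<Rightarrow> nat" where
  "remaining_bins ns = (\<Sum>j < length Q. length (Q ! j) - ns ! j)"

lemma remaining_bins_decreasing:
  "length ns = length Q \<Longrightarrow> j < length Q \<Longrightarrow> ns ! j < length (Q ! j) \<Longrightarrow>
     remaining_bins (ns[j := Suc (ns ! j)]) < remaining_bins ns"
  unfolding remaining_bins_def by (rule sum_strict_mono_ex1) (auto simp: nth_list_update)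

lemma later_bin_in_later_bag:
  assumes "j < length Q" "ns ! j \<le> i" "i < length (Q ! j)"
  shows "\<exists>l. first_bag (plt (Q ! j ! (ns ! j))) \<le> l \<and> l < length X \<and> plt (Q ! j ! i) \<in> X ! l"
proof (cases "plt (Q ! j ! (ns ! j)) = plt (Q ! j ! i)")
  case True
  then show ?thesis
    using first_bag plt_nth_in_plts assms by (metis le_refl)
next
  case False
  with assms have "ns ! j < i" by (metis le_neq_implies_less)
  with False assms have "(plt (Q ! j ! (ns ! j)), plt (Q ! j ! i)) \<in> seq_arcs plt Q"
    unfolding seq_arcs_def by (auto intro!: nth_mem)
  then obtain a b where "a \<le> b" "b < length X"
    "plt (Q ! j ! (ns ! j)) \<in> X ! a" "plt (Q ! j ! i) \<in> X ! b"
    using arc_in_bags by blast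
  then show ?thesis
    by (intro exI[of _ b]) (auto dest: first_bag_le)
qed

definition greedy_inv :: "nat \<Rightarrow> nat list \<Rightarrow> bool" where
  "greedy_inv k ns \<longleftrightarrow> k < length X \<and> length ns = length Q \<and>
     (\<forall>j < length Q. \<forall>i < length (Q ! j). i < ns ! j \<longrightarrow> first_bag (plt (Q ! j ! i)) \<le> k) \<and>
     (\<forall>j < length Q. \<forall>i < length (Q ! j). ns ! j \<le> i \<longrightarrow>
        (\<exists>l. k \<le> l \<and> l < length X \<and> plt (Q ! j ! i) \<in> X ! l))"

lemma greedy_inv_start: "greedy_inv 0 (replicate (length Q) 0)"
  unfolding greedy_inv_def
proof (intro conjI allI impI)
  show "0 < length X"
    using dpd by (simp add: is_dpd_def)
  fix j i
  assume "j < length Q" "i < length (Q ! j)"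
  then show "\<exists>l. 0 \<le> l \<and> l < length X \<and> plt (Q ! j ! i) \<in> X ! l"
    using plts_in_some_bag plt_nth_in_plts by blast
qed auto

lemma open_plts_subset_bag:
  assumes inv: "greedy_inv k ns"
  shows "open_plts plt Q (remaining ns) \<subseteq> X ! k"
proof
  fix t assume "t \<in> open_plts plt Q (remaining ns)"
  then obtain i a j c where i: "i < length Q" "ns ! i \<le> a" "a < length (Q ! i)" "plt (Q ! i ! a) = t"
    and j: "j < length Q" "c < ns ! j" "c < length (Q ! j)" "plt (Q ! j ! c) = t"
    by (auto simp: open_plts_def remaining_nth seq_minus_drop
        in_set_drop_conv_nth in_set_take_conv_nth)
  have "first_bag t \<le> k"
    using inv j unfolding greedy_inv_def by auto
  moreover obtain l where "k \<le> l" "l < length X" "t \<in> X ! l"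
    using inv i unfolding greedy_inv_def by blast
  moreover have "t \<in> X ! first_bag t"
    using first_bag plt_nth_in_plts j by blast
  ultimately show "t \<in> X ! k"
    using bag_interval by blast
qed

lemma card_open_plts_le:
  "greedy_inv k ns \<Longrightarrow> card (open_plts plt Q (remaining ns)) \<le> Max (card ` set X)"
proof -
  assume inv: "greedy_inv k ns"
  then have k: "k < length X"
    by (simp add: greedy_inv_def)
  have "card (open_plts plt Q (remaining ns)) \<le> card (X ! k)"
    using open_plts_subset_bag[OF inv] finite_bag[OF k] by (rule card_mono[rotated])
  also have "\<dots> \<le> Max (card ` set X)"
    using k by (rule card_nth_le_Max_card)
  finally show ?thesis .
qed

lemma greedy_inv_step:
  assumes inv: "greedy_inv k ns" and j0: "j0 < length Q" "ns ! j0 < length (Q ! j0)"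
    and least: "\<And>j. j < length Q \<Longrightarrow> ns ! j < length (Q ! j) \<Longrightarrow>
                  first_bag (plt (Q ! j0 ! (ns ! j0))) \<le> first_bag (plt (Q ! j ! (ns ! j)))"
  shows "greedy_inv (max k (first_bag (plt (Q ! j0 ! (ns ! j0))))) (ns[j0 := Suc (ns ! j0)])"
proof -
  define g where "g = first_bag (plt (Q ! j0 ! (ns ! j0)))"
  define ns' where "ns' = ns[j0 := Suc (ns ! j0)]"
  have len: "length ns = length Q"
    using inv by (simp add: greedy_inv_def)
  have removed: "first_bag (plt (Q ! j ! i)) \<le> max k g"
    if "j < length Q" "i < length (Q ! j)" "i < ns' ! j" for j i
  proof (cases "j = j0 \<and> i = ns ! j0")
    case False
    with that len j0 have "i < ns ! j"
      by (auto simp: ns'_def nth_list_update split: if_splits)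
    with inv that show ?thesis
      unfolding greedy_inv_def by fastforce
  qed (simp add: g_def)
  have remains: "\<exists>l. max k g \<le> l \<and> l < length X \<and> plt (Q ! j ! i) \<in> X ! l"
    if j: "j < length Q" and i_len: "i < length (Q ! j)" and "ns' ! j \<le> i" for j i
  proof -
    from that len j0 have i: "ns ! j \<le> i"
      by (auto simp: ns'_def nth_list_update split: if_splits)
    show ?thesis
    proof (cases "g \<le> k")
      case True
      with inv j i_len i show ?thesis
        unfolding greedy_inv_def by (simp add: max_def)
    next
      case False
      have "g \<le> first_bag (plt (Q ! j ! (ns ! j)))"
        using least j i i_len g_def by simp
      moreover obtain l where "first_bag (plt (Q ! j ! (ns ! j))) \<le> l" "l < length X"
        "plt (Q ! j ! i) \<in> X ! l"
        using later_bin_in_later_bag[OF j i i_len] by blast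
      ultimately show ?thesis
        using False by (intro exI[of _ l]) auto
    qed
  qed
  have "max k g < length X"
    using inv first_bag plt_nth_in_plts[OF j0] by (simp add: greedy_inv_def g_def)
  with removed remains len show ?thesis
    unfolding greedy_inv_def ns'_def g_def by simp
qed

lemma greedy_processing:
  "greedy_inv k ns \<Longrightarrow> \<exists>cs. cs \<noteq> [] \<and> hd cs = remaining ns \<and>
     last cs = replicate (length Q) [] \<and> successively trans_step cs \<and>
     (\<forall>c \<in> set cs. card (open_plts plt Q c) \<le> Max (card ` set X))"
proof (induction "remaining_bins ns" arbitrary: k ns rule: less_induct)
  case less
  show ?case
  proof (cases "\<forall>j < length Q. length (Q ! j) \<le> ns ! j")
    case True
    then show ?thesis
      using card_open_plts_le[OF less.prems] remaining_final
      by (intro exI[of _ "[remaining ns]"]) auto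
  next
    case False
    then obtain j1 where j1: "j1 < length Q \<and> ns ! j1 < length (Q ! j1)"
      by (auto simp: not_le)
    obtain j0 where j0: "j0 < length Q \<and> ns ! j0 < length (Q ! j0)"
      "\<forall>j. j < length Q \<and> ns ! j < length (Q ! j) \<longrightarrow>
         first_bag (plt (Q ! j0 ! (ns ! j0))) \<le> first_bag (plt (Q ! j ! (ns ! j)))"
      using ex_has_least_nat[of "\<lambda>j. j < length Q \<and> ns ! j < length (Q ! j)" j1
          "\<lambda>j. first_bag (plt (Q ! j ! (ns ! j)))", OF j1] by blast
    define ns' where "ns' = ns[j0 := Suc (ns ! j0)]"
    have len: "length ns = length Q"
      using less.prems by (simp add: greedy_inv_def)
    have "greedy_inv (max k (first_bag (plt (Q ! j0 ! (ns ! j0))))) ns'"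
      unfolding ns'_def using less.prems j0 by (intro greedy_inv_step) auto
    moreover have "remaining_bins ns' < remaining_bins ns"
      unfolding ns'_def using remaining_bins_decreasing len j0 by blast
    ultimately obtain cs where cs: "cs \<noteq> []" "hd cs = remaining ns'"
      "last cs = replicate (length Q) []" "successively trans_step cs"
      "\<forall>c \<in> set cs. card (open_plts plt Q c) \<le> Max (card ` set X)"
      using less.hyps by blast
    have "trans_step (remaining ns) (remaining ns')"
      unfolding ns'_def using trans_step_remaining len j0 by blast
    with cs show ?thesis
      using card_open_plts_le[OF less.prems]
      by (intro exI[of _ "remaining ns # cs"]) (auto simp: successively_Cons)
  qed
qed

end

theorem theorem2:
  fixes plt :: "'b \<Rightarrow> nat" and Q :: "'b list list" and p :: nat
    and X :: "nat set list"
  assumes "is_instance plt Q"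
    and "0 < p"
    and "is_dpd (plts plt Q) (seq_arcs plt Q) X"
    and "dpd_width X = int p - 1"
  shows "\<exists>cs. is_processing Q cs \<and> (\<forall>c \<in> set cs. card (open_plts plt Q c) \<le> p)"
proof -
  interpret sequence_graph_dpd plt Q X
    using assms(3) by unfold_locales
  obtain cs where "cs \<noteq> []" "hd cs = Q" "last cs = replicate (length Q) []"
    "successively trans_step cs" "\<forall>c \<in> set cs. card (open_plts plt Q c) \<le> Max (card ` set X)"
    using greedy_processing[OF greedy_inv_start] unfolding remaining_start by blast
  moreover have "Max (card ` set X) = p"
    using assms(4) by (simp add: dpd_width_def)
  ultimately show ?thesis
    by (intro exI[of _ cs]) (simp add: is_processing_iff_successively)
qed

end
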